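(* Let $p$ be an odd prime, $R=F_p+vF_p$ with $v^2=v$, $\theta=\lambda+v\mu$ ($\lambda,\mu\in F_p$) a unit of $R$, and let $C$ be a $\theta$-constacyclic code of length $n$ over $R$ with generating set in standard form $\{vg_{1-v}(x),(1-v)g_v(x)\}$. Then: (1) $C^\perp=\langle vh_{1-v}^*(x),(1-v)h_v^*(x)\rangle$ and $|C^\perp|=p^{\deg(g_{1-v}(x))+\deg(g_v(x))}$; (2) $C^\perp=\langle vh_{1-v}^*(x)+(1-v)h_v^*(x)\rangle$; (3) $\phi_\theta(C^\perp)\subseteq\langle h_{1-v}^*(x)h_v^*(x)\rangle$.
   Context: A $\theta$-constacyclic code of length $n$ over $R$ is an $R$-submodule of $R^n$ closed under $(c_0,\dots,c_{n-1})\mapsto(\theta c_{n-1},c_0,\dots,c_{n-2})$, identified with an ideal of $R[x]/\langle x^n-\theta\rangle$ via $(c_i)\mapsto\sum c_ix^i$ (and likewise $C^\perp$, a $\theta^{-1}$-constacyclic code, with an ideal of $R[x]/\langle x^n-\theta^{-1}\rangle$); $\langle\cdot\rangle$ denotes the generated ideal. $C^\perp$ is the dual with respect to the standard Euclidean inner product on $R^n$. A set $\{vg_1(x),(1-v)g_2(x)\}$ is a generating set in standard form for $C$ if it generates $C$, each $g_i\in F_p[x]$ is monic or $0$, $g_1\mid x^n-(\lambda+\mu)$ if $g_1\ne0$, and $g_2\mid x^n-\lambda$ if $g_2\ne0$. Let $h_{1-v}(x),h_v(x)\in F_p[x]$ be defined by $g_{1-v}(x)h_{1-v}(x)=x^n-(\lambda+\mu)$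 and $g_v(x)h_v(x)=x^n-\lambda$; for $h\in\{h_{1-v},h_v\}$ put $\widetilde h(x)=x^{\deg h}h(1/x)$ and $h^*(x)=\frac{1}{h(0)}\widetilde h(x)$. The polynomial Gray map $\phi_\theta$ sends $f(x)=r(x)+vq(x)$ ($r,q\in F_p[x]$ of degree $<n$) to $\lambda(\lambda+\mu)q(x)+x^n[-\mu r(x)-(\lambda+\mu)q(x)]\in F_p[x]/\langle x^{2n}-1\rangle$. *)

theory Defs
  imports "HOL-Computational_Algebra.Polynomial" "HOL-Library.Cardinality"
begin

text \<open>The ring R = F + vF with v^2 = v. The element VR r q stands for r + v q.\<close>
datatype 'a vr = VR (vr_r: 'a) (vr_q: 'a)

instantiation vr :: (comm_ring_1) comm_ring_1
begin
definition zero_vr where "0 = VR 0 0"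
definition one_vr where "1 = VR 1 0"
definition plus_vr where "x + y = VR (vr_r x + vr_r y) (vr_q x + vr_q y)"
definition minus_vr where "x - y = VR (vr_r x - vr_r y) (vr_q x - vr_q y)"
definition uminus_vr where "- x = VR (- vr_r x) (- vr_q x)"
definition times_vr where
  "x * y = VR (vr_r x * vr_r y) (vr_r x * vr_q y + vr_q x * vr_r y + vr_q x * vr_q y)"
instance
proof
  fix a b c :: "'a vr"
  show "a * b * c = a * (b * c)"
    by (cases a; cases b; cases c) (simp add: times_vr_def algebra_simps)
  show "a * b = b * a"
    by (cases a; cases b) (simp add: times_vr_def algebra_simps)
  show "1 * a = a" by (cases a) (simp add: times_vr_def one_vr_def)
  show "a + b + c = a + (b + c)" by (simp add: plus_vr_def algebra_simps)
  show "a + b = b + a" by (simp add: plus_vr_def algebra_simps)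
  show "0 + a = a" by (cases a) (simp add: plus_vr_def zero_vr_def)
  show "- a + a = 0" by (simp add: plus_vr_def uminus_vr_def zero_vr_def)
  show "a - b = a + - b" by (simp add: plus_vr_def uminus_vr_def minus_vr_def)
  show "(a + b) * c = a * c + b * c"
    by (cases a; cases b; cases c) (simp add: times_vr_def plus_vr_def algebra_simps)
  show "(0::'a vr) \<noteq> 1" by (simp add: zero_vr_def one_vr_def)
qed
end

definition vv :: "'a::comm_ring_1 vr" where "vv = VR 0 1"

definition emb :: "'a::comm_ring_1 poly \<Rightarrow> 'a vr poly" where
  "emb f = map_poly (\<lambda>c. VR c 0) f"

definition vinv :: "'a::comm_ring_1 vr \<Rightarrow> 'a vr" where
  "vinv t = (THE u. t * u = 1)"

text \<open>Words of length n over a ring: functions vanishing from index n on.\<close>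
definition words :: "nat \<Rightarrow> (nat \<Rightarrow> 'b::comm_ring_1) set" where
  "words n = {c. \<forall>i\<ge>n. c i = 0}"

definition submodule_code :: "nat \<Rightarrow> (nat \<Rightarrow> 'b::comm_ring_1) set \<Rightarrow> bool" where
  "submodule_code n C \<longleftrightarrow> C \<subseteq> words n \<and> (\<lambda>i. 0) \<in> C \<and>
     (\<forall>c\<in>C. \<forall>d\<in>C. (\<lambda>i. c i + d i) \<in> C) \<and>
     (\<forall>a. \<forall>c\<in>C. (\<lambda>i. a * c i) \<in> C)"

definition cshift :: "'b::comm_ring_1 \<Rightarrow> nat \<Rightarrow> (nat \<Rightarrow> 'b) \<Rightarrow> (nat \<Rightarrow> 'b)" where
  "cshift \<theta> n c = (\<lambda>i. if i = 0 then \<theta> * c (n - 1) else if i < n then c (i - 1) else 0)"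

definition constacyclic :: "'b::comm_ring_1 \<Rightarrow> nat \<Rightarrow> (nat \<Rightarrow> 'b) set \<Rightarrow> bool" where
  "constacyclic \<theta> n C \<longleftrightarrow> submodule_code n C \<and> (\<forall>c\<in>C. cshift \<theta> n c \<in> C)"

definition dual_code :: "nat \<Rightarrow> (nat \<Rightarrow> 'b::comm_ring_1) set \<Rightarrow> (nat \<Rightarrow> 'b) set" where
  "dual_code n C = {d \<in> words n. \<forall>c\<in>C. (\<Sum>i<n. c i * d i) = 0}"

definition poly_of :: "nat \<Rightarrow> (nat \<Rightarrow> 'b::comm_ring_1) \<Rightarrow> 'b poly" where
  "poly_of n c = (\<Sum>i<n. monom (c i) i)"

text \<open>The ideal of S[x]/<m> generated by a finite set G, where m is monic; residue classes
  are represented by their unique representatives of degree < degree m.\<close>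
definition quot_ideal_gen :: "'b::comm_ring_1 poly \<Rightarrow> 'b poly set \<Rightarrow> 'b poly set" where
  "quot_ideal_gen m G = {f. degree f < degree m \<and>
      (\<exists>a q. f = (\<Sum>g\<in>G. a g * g) + q * m)}"

text \<open>h^*(x) = (1/h(0)) x^{deg h} h(1/x).\<close>
definition recip_star :: "'a::field poly \<Rightarrow> 'a poly" where
  "recip_star h = smult (inverse (coeff h 0)) (reflect_poly h)"

text \<open>The polynomial Gray map phi_theta, for theta = lambda + v mu, applied to f = r + v q.\<close>
definition gray :: "'a::comm_ring_1 vr \<Rightarrow> nat \<Rightarrow> 'a vr poly \<Rightarrow> 'a poly" where
  "gray \<theta> n f = (let l = vr_r \<theta>; m = vr_q \<theta>; r = map_poly vr_r f; q = map_poly vr_q f in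
     smult (l * (l + m)) q + monom 1 n * (smult (- m) r - smult (l + m) q))"

end

theory Submission
  imports Defs
begin

(* Under r + v q |-> (r + q, r), R = F + vF becomes F x F and a theta-constacyclic code splits as
   C = v C1 + (1 - v) C2, where C1 and C2 are the constacyclic codes over F generated by g_{1-v}
   and g_v; the Euclidean dual splits componentwise. Over a field, for g h = x^n - c the dual of
   the code generated by g is generated by h^*: the words of h^* are orthogonal to those of g, and
   a triangular argument bounds the dual by p^(deg g) words, which the words of h^* already
   reach. For the Gray map, phi(f) = (lambda + mu) a (lambda - x^n) + lambda b (x^n - lambda - mu)
   in terms of the two components a, b of f, and lambda - x^n, lambda + mu - x^n lie in the
   ideals (h_v^*, x^2n - 1), (h_{1-v}^*, x^2n - 1) respectively. *)

section \<open>Words and polynomials\<close>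

lemma coeff_poly_of: "coeff (poly_of n c) i = (if i < n then c i else 0)"
  unfolding poly_of_def by (simp add: coeff_sum)

lemma degree_poly_of_less: "n > 0 \<Longrightarrow> degree (poly_of n c) < n"
  using degree_le[of "n - 1" "poly_of n c"] by (fastforce simp: coeff_poly_of)

lemma poly_of_coeff: "degree p < n \<Longrightarrow> poly_of n (coeff p) = p"
  by (rule poly_eqI) (auto simp: coeff_poly_of coeff_eq_0)

lemma coeff_poly_of_words: "c \<in> words n \<Longrightarrow> coeff (poly_of n c) = c"
  by (rule ext) (auto simp: coeff_poly_of words_def)

lemma coeff_in_words: "degree p < n \<Longrightarrow> coeff p \<in> words n"
  by (auto simp: words_def coeff_eq_0)

lemma inj_on_poly_of: "inj_on (poly_of n) (words n)"
  by (metis coeff_poly_of_words inj_onI)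

lemma poly_of_image_eqD:
  "A \<subseteq> words n \<Longrightarrow> B \<subseteq> words n \<Longrightarrow> poly_of n ` A = poly_of n ` B \<Longrightarrow> A = B"
  using inj_on_image_eq_iff[OF inj_on_poly_of] by blast

lemma card_words:
  assumes "finite (UNIV :: 'a set)"
  shows "finite (words k :: (nat \<Rightarrow> 'a::comm_ring_1) set)"
    and "card (words k :: (nat \<Rightarrow> 'a) set) = CARD('a) ^ k"
proof -
  define L where "L = {xs :: 'a list. length xs = k}"
  define F where "F = (\<lambda>xs :: 'a list. \<lambda>i. if i < k then xs ! i else 0)"
  have "bij_betw F L (words k)"
  proof (rule bij_betw_imageI)
    show "inj_on F L"
    proof (rule inj_onI, rule nth_equalityI)
      fix xs ys i assume "xs \<in> L" "ys \<in> L" "F xs = F ys" "i < length xs"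
      then have "F xs i = F ys i" by simp
      with \<open>xs \<in> L\<close> \<open>i < length xs\<close> show "xs ! i = ys ! i" by (simp add: L_def F_def)
    qed (simp add: L_def)
    have "c = F (map c [0..<k])" if "c \<in> words k" for c
      using that by (auto simp: F_def words_def)
    then show "F ` L = words k"
      by (auto simp: L_def F_def words_def intro!: image_eqI)
  qed
  moreover have "finite L" "card L = CARD('a) ^ k"
    using finite_lists_length_eq[OF assms, of k] card_lists_length_eq[OF assms, of k]
    by (simp_all add: L_def)
  ultimately show "finite (words k :: (nat \<Rightarrow> 'a) set)"
    and "card (words k :: (nat \<Rightarrow> 'a) set) = CARD('a) ^ k"
    by (auto simp: bij_betw_finite bij_betw_same_card[symmetric])
qed

lemma coeff_const_poly [simp]: "coeff [:c:] i = (if i = 0 then c else 0)"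
  by (cases i) simp_all

lemma degree_monom_minus_const: "n > 0 \<Longrightarrow> degree (monom (1::'a::comm_ring_1) n - [:c:]) = n"
  by (rule antisym, rule degree_le) (auto intro!: le_degree)

lemma binomial_factorD:
  fixes g h :: "'a::field poly"
  assumes n: "n > 0" and gh: "g * h = monom 1 n - [:c:]" and c: "c \<noteq> 0"
  shows "g \<noteq> 0" "h \<noteq> 0" "degree g + degree h = n" "coeff h 0 \<noteq> 0"
proof -
  have "g * h \<noteq> 0"
    using gh degree_monom_minus_const[OF n, of c] n by auto
  then show g0: "g \<noteq> 0" and h0: "h \<noteq> 0" by auto
  show "degree g + degree h = n"
    using degree_mult_eq[OF g0 h0] gh degree_monom_minus_const[OF n, of c] by simp
  have "coeff g 0 * coeff h 0 = - c"
    using arg_cong[OF gh, of "\<lambda>p. coeff p 0"] n by (simp add: coeff_mult)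
  with c show "coeff h 0 \<noteq> 0" by auto
qed

lemma reflect_poly_recip_star:
  "coeff h 0 \<noteq> 0 \<Longrightarrow> reflect_poly (recip_star h) = smult (inverse (coeff h 0)) h"
  by (simp add: recip_star_def reflect_poly_smult)

lemma degree_recip_star: "coeff h 0 \<noteq> 0 \<Longrightarrow> degree (recip_star h) = degree h"
  by (simp add: recip_star_def)

lemma recip_star_dvd:
  fixes g h :: "'a::field poly"
  assumes n: "n > 0" and gh: "g * h = monom 1 n - [:c:]" and c: "c \<noteq> 0"
  shows "recip_star h dvd monom 1 n - [:inverse c:]"
proof -
  have "reflect_poly (monom 1 n - [:c:]) = smult (- c) (monom 1 n - [:inverse c:])"
    using n c by (intro poly_eqI)
      (auto simp: coeff_reflect_poly degree_monom_minus_const)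
  moreover have "reflect_poly h dvd reflect_poly (monom 1 n - [:c:])"
    unfolding gh[symmetric] reflect_poly_mult by simp
  ultimately show ?thesis
    using c binomial_factorD(4)[OF assms] by (simp add: recip_star_def dvd_smult_iff smult_dvd)
qed

section \<open>Duals of cyclic codes over a field\<close>

definition divisible_words :: "nat \<Rightarrow> 'a::comm_ring_1 poly \<Rightarrow> (nat \<Rightarrow> 'a) set" where
  "divisible_words n g = {u \<in> words n. g dvd poly_of n u}"

lemma divisible_words_subset_words: "divisible_words n g \<subseteq> words n"
  by (auto simp: divisible_words_def)

lemma zero_mem_divisible_words: "(\<lambda>i. 0) \<in> divisible_words n g"
  by (simp add: divisible_words_def words_def poly_of_def)

lemma dual_code_subset_words: "dual_code n C \<subseteq> words n"
  by (auto simp: dual_code_def)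

lemma diff_mem_dual_code:
  "d \<in> dual_code n C \<Longrightarrow> d' \<in> dual_code n C \<Longrightarrow> (\<lambda>i. d i - d' i) \<in> dual_code n C"
  by (auto simp: dual_code_def words_def right_diff_distrib sum_subtractf)

lemma inner_eq_coeff_mult_reflect_poly:
  fixes p q :: "'a::comm_ring_1 poly"
  assumes n: "n > 0" and q: "degree q < n"
  shows "(\<Sum>i<n. coeff p i * coeff q i) =
    coeff (p * (monom 1 (n - 1 - degree q) * reflect_poly q)) (n - 1)"
proof -
  have "coeff (p * (monom 1 (n - 1 - degree q) * reflect_poly q)) (n - 1) =
      (\<Sum>i\<le>n - 1. coeff p i * coeff (monom 1 (n - 1 - degree q) * reflect_poly q) (n - 1 - i))"
    by (rule coeff_mult)
  also have "\<dots> = (\<Sum>i\<le>n - 1. coeff p i * coeff q i)"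
    using q by (intro sum.cong) (auto simp: coeff_monom_mult coeff_reflect_poly coeff_eq_0)
  also have "{..n - 1} = {..<n}" using n by auto
  finally show ?thesis by simp
qed

(* For g h = x^n - c, the inner product of the words of g s and h^* t is the coefficient of
   degree n - 1 in (x^n - c) s x^e t~ / h(0), which has no term in that degree. *)
lemma divisible_words_recip_star_subset_dual:
  fixes g h :: "'a::field poly"
  assumes n: "n > 0" and gh: "g * h = monom 1 n - [:c:]" and c: "c \<noteq> 0"
  shows "divisible_words n (recip_star h) \<subseteq> dual_code n (divisible_words n g)"
proof
  note fac = binomial_factorD[OF assms]
  fix d assume "d \<in> divisible_words n (recip_star h)"
  then have dw: "d \<in> words n" and hd: "recip_star h dvd poly_of n d"
    by (auto simp: divisible_words_def)
  have "(\<Sum>i<n. u i * d i) = 0" if uw: "u \<in> words n" and gu: "g dvd poly_of n u" for u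
  proof -
    define P Q where "P = poly_of n u" and "Q = poly_of n d"
    have inner: "(\<Sum>i<n. u i * d i) = (\<Sum>i<n. coeff P i * coeff Q i)"
      using uw dw by (simp add: P_def Q_def coeff_poly_of_words)
    show ?thesis
    proof (cases "P = 0 \<or> Q = 0")
      case True
      then show ?thesis unfolding inner by auto
    next
      case False
      obtain s where s: "P = g * s" using gu by (auto simp: P_def)
      obtain t where t: "Q = recip_star h * t" using hd by (auto simp: Q_def)
      have "s \<noteq> 0" "t \<noteq> 0" "recip_star h \<noteq> 0"
        using False s t fac by (auto simp: recip_star_def)
      have dP: "degree P = degree g + degree s" and dQ: "degree Q = degree h + degree t"
        using s t fac \<open>s \<noteq> 0\<close> \<open>t \<noteq> 0\<close> \<open>recip_star h \<noteq> 0\<close>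
        by (simp_all add: degree_mult_eq degree_recip_star)
      have dQn: "degree Q < n" and dPn: "degree P < n"
        using degree_poly_of_less[OF n] by (simp_all add: P_def Q_def)
      define e where "e = n - 1 - degree Q"
      define W where "W = s * (monom 1 e * reflect_poly t)"
      have "degree W \<le> degree s + (e + degree t)"
        unfolding W_def
        by (intro order.trans[OF degree_mult_le] add_mono order.trans[OF degree_mult_le]
            order.trans[OF degree_reflect_poly_le]) (auto simp: degree_monom_le)
      then have dW: "degree W < n - 1"
        using dP dQ dPn dQn fac(3) by (simp add: e_def)
      have "P * (monom 1 e * reflect_poly Q) = smult (inverse (coeff h 0)) ((g * h) * W)"
        unfolding W_def s t reflect_poly_mult reflect_poly_recip_star[OF fac(4)]
        by (simp add: ac_simps)
      also have "\<dots> = smult (inverse (coeff h 0)) (monom 1 n * W - smult c W)"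
        by (simp add: gh algebra_simps)
      finally have "coeff (P * (monom 1 e * reflect_poly Q)) (n - 1) = 0"
        using dW n by (simp add: coeff_monom_mult coeff_eq_0)
      then show ?thesis
        unfolding inner e_def inner_eq_coeff_mult_reflect_poly[OF n dQn] .
    qed
  qed
  with dw show "d \<in> dual_code n (divisible_words n g)"
    by (auto simp: dual_code_def divisible_words_def)
qed

(* The words of x^j g are triangular: orthogonality to them forces the entries of index at least
   degree g to vanish one by one. *)
lemma dual_divisible_words_eq_0:
  fixes g :: "'a::idom poly"
  assumes g: "g \<noteq> 0" and d: "d \<in> dual_code n (divisible_words n g)"
    and low: "\<And>i. i < degree g \<Longrightarrow> d i = 0"
  shows "d i = 0"
proof (induction i rule: less_induct)
  case (less i)
  consider "i < degree g" | "n \<le> i" | "degree g \<le> i" "i < n" by linarith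
  then show ?case
  proof cases
    case 1
    then show ?thesis by (rule low)
  next
    case 2
    then show ?thesis using d by (auto simp: dual_code_def words_def)
  next
    case 3
    define G where "G = monom 1 (i - degree g) * g"
    have coeff_G: "coeff G j = (if j = i then lead_coeff g else 0)" if "i \<le> j" for j
      using 3 that by (auto simp: G_def coeff_monom_mult coeff_eq_0)
    have "degree G < n"
      using 3 degree_mult_le[of "monom 1 (i - degree g)" g] unfolding G_def
      by (simp add: degree_monom_eq)
    then have "coeff G \<in> divisible_words n g"
      by (simp add: divisible_words_def coeff_in_words poly_of_coeff G_def)
    then have "0 = (\<Sum>j<n. coeff G j * d j)"
      using d by (auto simp: dual_code_def)
    also have "\<dots> = (\<Sum>j<n. if j = i then lead_coeff g * d i else 0)"
      using less.IH coeff_G by (intro sum.cong) (auto, metis linorder_not_le)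
    also have "\<dots> = lead_coeff g * d i"
      using 3 by simp
    finally show ?thesis using g by simp
  qed
qed

lemma card_dual_divisible_words_le:
  fixes g :: "'a::idom poly"
  assumes fin: "finite (UNIV :: 'a set)" and g: "g \<noteq> 0"
  shows "card (dual_code n (divisible_words n g)) \<le> CARD('a) ^ degree g"
proof -
  let ?D = "dual_code n (divisible_words n g)"
  define trunc where "trunc = (\<lambda>(d :: nat \<Rightarrow> 'a) i. if i < degree g then d i else 0)"
  have "inj_on trunc ?D"
  proof (rule inj_onI)
    fix d d' assume dD: "d \<in> ?D" "d' \<in> ?D" and "trunc d = trunc d'"
    then have "d i - d' i = 0" if "i < degree g" for i
      using that unfolding trunc_def by (metis (mono_tags) diff_self)
    then show "d = d'"
      using dual_divisible_words_eq_0[OF g diff_mem_dual_code[OF dD]] by (simp add: fun_eq_iff)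
  qed
  moreover have "trunc ` ?D \<subseteq> words (degree g)"
    by (auto simp: trunc_def words_def)
  ultimately show ?thesis
    using card_inj_on_le[of trunc ?D] card_words[OF fin] by (metis card_image card_mono)
qed

lemma card_divisible_words_ge:
  fixes f :: "'a::idom poly"
  assumes fin: "finite (UNIV :: 'a set)" and f: "f \<noteq> 0"
  shows "CARD('a) ^ (n - degree f) \<le> card (divisible_words n f)"
proof -
  define k where "k = n - degree f"
  define mul where "mul = (\<lambda>t. coeff (f * poly_of k t))"
  have deg: "degree (f * poly_of k t) < n" if "degree f < n" for t
  proof (cases "k = 0")
    case True
    then show ?thesis using that by (simp add: poly_of_def)
  next
    case False
    then show ?thesis
      using degree_mult_le[of f "poly_of k t"] degree_poly_of_less[of k t] by (simp add: k_def)
  qed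
  show ?thesis
  proof (cases "degree f < n")
    case True
    have "inj_on mul (words k)"
      using f inj_on_poly_of[of k] by (auto simp: inj_on_def mul_def coeff_inject)
    moreover have "mul ` words k \<subseteq> divisible_words n f"
      using deg[OF True] by (auto simp: mul_def divisible_words_def coeff_in_words poly_of_coeff)
    moreover have "finite (divisible_words n f)"
      using card_words(1)[OF fin] by (rule rev_finite_subset) (auto simp: divisible_words_def)
    ultimately show ?thesis
      using card_words(2)[OF fin, of k] unfolding k_def by (metis card_image card_mono)
  next
    case False
    have "(\<lambda>i. 0) \<in> divisible_words n f"
      by (simp add: divisible_words_def words_def poly_of_def)
    then have "card (divisible_words n f) \<noteq> 0"
      using card_words(1)[OF fin, of n] by (subst card_0_eq) (auto simp: divisible_words_def
        intro: rev_finite_subset)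
    then show ?thesis using False by simp
  qed
qed

theorem dual_divisible_words:
  fixes g h :: "'a::field poly"
  assumes fin: "finite (UNIV :: 'a set)"
    and n: "n > 0" and gh: "g * h = monom 1 n - [:c:]" and c: "c \<noteq> 0"
  shows "dual_code n (divisible_words n g) = divisible_words n (recip_star h)"
    and "card (dual_code n (divisible_words n g)) = CARD('a) ^ degree g"
proof -
  note fac = binomial_factorD[OF n gh c]
  let ?D = "dual_code n (divisible_words n g)" and ?H = "divisible_words n (recip_star h)"
  have HD: "?H \<subseteq> ?D" by (rule divisible_words_recip_star_subset_dual[OF n gh c])
  have finD: "finite ?D"
    using card_words(1)[OF fin] dual_code_subset_words by (rule rev_finite_subset)
  have "recip_star h \<noteq> 0" using fac by (simp add: recip_star_def)
  then have "CARD('a) ^ degree g \<le> card ?H"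
    using card_divisible_words_ge[OF fin] fac by (metis add_diff_cancel_right' degree_recip_star)
  moreover have "card ?H \<le> card ?D" using card_mono[OF finD HD] .
  moreover have "card ?D \<le> CARD('a) ^ degree g"
    using card_dual_divisible_words_le[OF fin fac(1)] .
  ultimately show "card ?D = CARD('a) ^ degree g" and "?D = ?H"
    using card_subset_eq[OF finD HD] by simp_all
qed

section \<open>The ring F + vF\<close>

locale ring_homomorphism =
  fixes f :: "'a::comm_ring_1 \<Rightarrow> 'b::comm_ring_1"
  assumes hom_add [simp]: "f (x + y) = f x + f y"
    and hom_mult [simp]: "f (x * y) = f x * f y"
    and hom_one [simp]: "f 1 = 1"
begin

lemma hom_zero [simp]: "f 0 = 0"
  using hom_add[of 0 0] by simp

lemma hom_diff [simp]: "f (x - y) = f x - f y"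
  using hom_add[of "x - y" y] by (simp add: algebra_simps)

lemma hom_sum: "f (sum g A) = (\<Sum>x\<in>A. f (g x))"
  using sum_comp_morphism[of f g A] by (simp add: comp_def)

lemma map_poly_add: "map_poly f (p + q) = map_poly f p + map_poly f q"
  by (rule poly_eqI) (simp add: coeff_map_poly)

lemma map_poly_diff: "map_poly f (p - q) = map_poly f p - map_poly f q"
  by (rule poly_eqI) (simp add: coeff_map_poly)

lemma map_poly_sum: "map_poly f (sum g A) = (\<Sum>x\<in>A. map_poly f (g x))"
  by (induction A rule: infinite_finite_induct) (simp_all add: map_poly_add)

lemma map_poly_mult: "map_poly f (p * q) = map_poly f p * map_poly f q"
  by (rule poly_eqI) (simp add: coeff_map_poly coeff_mult hom_sum)

lemma map_poly_const: "map_poly f [:z:] = [:f z:]"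
  by (rule poly_eqI) (simp add: coeff_map_poly)

lemma map_poly_monom_1: "map_poly f (monom 1 n) = monom 1 n"
  by (simp add: map_poly_monom)

lemma map_poly_smult: "map_poly f (smult z p) = smult (f z) (map_poly f p)"
  by (rule poly_eqI) (simp add: coeff_map_poly)

lemma map_poly_poly_of: "map_poly f (poly_of n c) = poly_of n (\<lambda>i. f (c i))"
  by (rule poly_eqI) (simp add: coeff_map_poly coeff_poly_of)

lemmas map_poly_simps =
  map_poly_add map_poly_diff map_poly_mult map_poly_smult map_poly_const map_poly_monom_1

end

(* vr_v and vr_r are the v- and (1 - v)-components: r + v q = v (r + q) + (1 - v) r. *)
definition vr_v :: "'a::comm_ring_1 vr \<Rightarrow> 'a" where
  "vr_v z = vr_r z + vr_q z"

interpretation vr_v: ring_homomorphism vr_v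
  by unfold_locales (simp_all add: vr_v_def plus_vr_def times_vr_def one_vr_def algebra_simps)

interpretation vr_r: ring_homomorphism vr_r
  by unfold_locales (simp_all add: plus_vr_def times_vr_def one_vr_def)

lemma vr_v_VR [simp]: "vr_v (VR r q) = r + q"
  by (simp add: vr_v_def)

lemma vr_v_vv [simp]: "vr_v vv = 1" and vr_r_vv [simp]: "vr_r vv = 0"
  by (simp_all add: vv_def)

lemma vr_eqI: "vr_v x = vr_v y \<Longrightarrow> vr_r x = vr_r y \<Longrightarrow> x = y"
  by (cases x; cases y) (simp add: vr_v_def)

lemma poly_vr_eqI:
  "map_poly vr_v p = map_poly vr_v q \<Longrightarrow> map_poly vr_r p = map_poly vr_r q \<Longrightarrow> p = q"
  by (rule poly_eqI, rule vr_eqI)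
    (metis coeff_map_poly vr_v.hom_zero, metis coeff_map_poly vr_r.hom_zero)

lemma map_poly_vr_v_emb [simp]: "map_poly vr_v (emb f) = f"
  and map_poly_vr_r_emb [simp]: "map_poly vr_r (emb f) = f"
  by (rule poly_eqI; simp add: emb_def coeff_map_poly zero_vr_def)+

lemma vinv_eq:
  assumes "\<theta> * u = 1" shows "vinv \<theta> = u"
  unfolding vinv_def
proof (rule the_equality)
  fix u' assume "\<theta> * u' = 1"
  then show "u' = u"
    using assms by (metis mult.left_commute mult.right_neutral)
qed (rule assms)

definition vr_code :: "nat \<Rightarrow> (nat \<Rightarrow> 'a) set \<Rightarrow> (nat \<Rightarrow> 'a) set \<Rightarrow> (nat \<Rightarrow> 'a::comm_ring_1 vr) set"
  where "vr_code n A B = {c \<in> words n. (\<lambda>i. vr_v (c i)) \<in> A \<and> (\<lambda>i. vr_r (c i)) \<in> B}"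

lemma vr_code_subset_words: "vr_code n A B \<subseteq> words n"
  by (auto simp: vr_code_def)

lemma words_components:
  "c \<in> words n \<Longrightarrow> (\<lambda>i. vr_v (c i)) \<in> words n \<and> (\<lambda>i. vr_r (c i)) \<in> words n"
  by (simp add: words_def)

lemma dual_vr_code:
  assumes A: "(\<lambda>i. 0) \<in> A" "A \<subseteq> words n" and B: "(\<lambda>i. 0) \<in> B" "B \<subseteq> words n"
  shows "dual_code n (vr_code n A B) = vr_code n (dual_code n A) (dual_code n B)"
proof (intro set_eqI iffI)
  fix d assume "d \<in> dual_code n (vr_code n A B)"
  then have dw: "d \<in> words n" and orth: "\<And>c. c \<in> vr_code n A B \<Longrightarrow> (\<Sum>i<n. c i * d i) = 0"
    by (auto simp: dual_code_def)
  have "(\<Sum>i<n. a i * vr_v (d i)) = 0" if "a \<in> A" for a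
  proof -
    have "(\<lambda>i. VR 0 (a i)) \<in> vr_code n A B"
      using that A B by (auto simp: vr_code_def words_def zero_vr_def)
    from arg_cong[OF orth[OF this], of vr_v] show ?thesis
      by (simp add: vr_v.hom_sum)
  qed
  moreover have "(\<Sum>i<n. b i * vr_r (d i)) = 0" if "b \<in> B" for b
  proof -
    have "(\<lambda>i. VR (b i) (- b i)) \<in> vr_code n A B"
      using that A B by (auto simp: vr_code_def words_def zero_vr_def)
    from arg_cong[OF orth[OF this], of vr_r] show ?thesis
      by (simp add: vr_r.hom_sum)
  qed
  ultimately show "d \<in> vr_code n (dual_code n A) (dual_code n B)"
    using dw words_components[OF dw] by (simp add: vr_code_def dual_code_def)
next
  fix d assume "d \<in> vr_code n (dual_code n A) (dual_code n B)"
  then have dw: "d \<in> words n"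
    and dA: "\<And>a. a \<in> A \<Longrightarrow> (\<Sum>i<n. a i * vr_v (d i)) = 0"
    and dB: "\<And>b. b \<in> B \<Longrightarrow> (\<Sum>i<n. b i * vr_r (d i)) = 0"
    by (auto simp: vr_code_def dual_code_def)
  have "(\<Sum>i<n. c i * d i) = 0" if "c \<in> vr_code n A B" for c
    using dA[of "\<lambda>i. vr_v (c i)"] dB[of "\<lambda>i. vr_r (c i)"] that
    by (intro vr_eqI) (simp_all add: vr_code_def vr_v.hom_sum vr_r.hom_sum)
  with dw show "d \<in> dual_code n (vr_code n A B)"
    by (simp add: dual_code_def)
qed

lemma card_vr_code:
  assumes "A \<subseteq> words n" "B \<subseteq> words n"
  shows "card (vr_code n A B) = card A * card B"
proof -
  have "bij_betw (\<lambda>c. ((\<lambda>i. vr_v (c i)), (\<lambda>i. vr_r (c i)))) (vr_code n A B) (A \<times> B)"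
  proof (rule bij_betw_byWitness[where f' = "\<lambda>(a, b) i. VR (b i) (a i - b i)"])
  qed (use assms in \<open>force simp: vr_code_def words_def vr_v_def zero_vr_def intro!: vr.expand\<close>)+
  then show ?thesis
    by (simp add: bij_betw_same_card card_cartesian_product)
qed


lemma poly_of_vr_code_divisible_words:
  assumes n: "n > 0"
  shows "poly_of n ` vr_code n (divisible_words n k1) (divisible_words n k2) =
    {f. degree f < n \<and> k1 dvd map_poly vr_v f \<and> k2 dvd map_poly vr_r f}"
proof (intro set_eqI iffI)
  fix f assume "f \<in> poly_of n ` vr_code n (divisible_words n k1) (divisible_words n k2)"
  then show "f \<in> {f. degree f < n \<and> k1 dvd map_poly vr_v f \<and> k2 dvd map_poly vr_r f}"
    by (auto simp: vr_code_def divisible_words_def degree_poly_of_less[OF n]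
        vr_v.map_poly_poly_of vr_r.map_poly_poly_of)
next
  fix f assume "f \<in> {f. degree f < n \<and> k1 dvd map_poly vr_v f \<and> k2 dvd map_poly vr_r f}"
  then have f: "degree f < n" "k1 dvd map_poly vr_v f" "k2 dvd map_poly vr_r f" by simp_all
  then have "coeff f \<in> vr_code n (divisible_words n k1) (divisible_words n k2)"
    using words_components[OF coeff_in_words[OF f(1)]]
    by (simp add: vr_code_def divisible_words_def coeff_in_words poly_of_coeff
        vr_v.map_poly_poly_of[symmetric] vr_r.map_poly_poly_of[symmetric])
  moreover have "f = poly_of n (coeff f)" using f by (simp add: poly_of_coeff)
  ultimately show "f \<in> poly_of n ` vr_code n (divisible_words n k1) (divisible_words n k2)"
    by blast
qed

lemma quot_ideal_gen_subset_vr: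
  fixes \<theta> :: "'a::comm_ring_1 vr"
  assumes n: "n > 0"
    and d1: "k1 dvd monom 1 n - [:vr_v \<theta>:]" and d2: "k2 dvd monom 1 n - [:vr_r \<theta>:]"
    and G: "\<And>g. g \<in> G \<Longrightarrow> k1 dvd map_poly vr_v g \<and> k2 dvd map_poly vr_r g"
  shows "quot_ideal_gen (monom 1 n - [:\<theta>:]) G \<subseteq>
    {f. degree f < n \<and> k1 dvd map_poly vr_v f \<and> k2 dvd map_poly vr_r f}"
proof
  fix f assume "f \<in> quot_ideal_gen (monom 1 n - [:\<theta>:]) G"
  then obtain a q where "degree f < n" and f: "f = (\<Sum>g\<in>G. a g * g) + q * (monom 1 n - [:\<theta>:])"
    by (auto simp: quot_ideal_gen_def degree_monom_minus_const[OF n])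
  moreover have "k1 dvd map_poly vr_v f" "k2 dvd map_poly vr_r f"
    unfolding f vr_v.map_poly_sum vr_r.map_poly_sum vr_v.map_poly_simps vr_r.map_poly_simps
    using G d1 d2 by (auto intro!: dvd_add dvd_sum dvd_mult)
  ultimately show "f \<in> {f. degree f < n \<and> k1 dvd map_poly vr_v f \<and> k2 dvd map_poly vr_r f}"
    by simp
qed

lemma quot_ideal_gen_vr_pair:
  fixes \<theta> :: "'a::comm_ring_1 vr"
  assumes n: "n > 0"
    and d1: "k1 dvd monom 1 n - [:vr_v \<theta>:]" and d2: "k2 dvd monom 1 n - [:vr_r \<theta>:]"
  shows "quot_ideal_gen (monom 1 n - [:\<theta>:]) {[:vv:] * emb k1, [:1 - vv:] * emb k2} =
    poly_of n ` vr_code n (divisible_words n k1) (divisible_words n k2)"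
proof -
  let ?G1 = "[:vv:] * emb k1" and ?G2 = "[:1 - vv:] * emb k2"
  have "k1 \<noteq> 0"
    using d1 degree_monom_minus_const[OF n, of "vr_v \<theta>"] n by auto
  then have "map_poly vr_v ?G1 \<noteq> map_poly vr_v ?G2"
    by (simp add: vr_v.map_poly_simps)
  then have "?G1 \<noteq> ?G2" by metis
  have "f \<in> quot_ideal_gen (monom 1 n - [:\<theta>:]) {?G1, ?G2}"
    if f: "degree f < n" "map_poly vr_v f = k1 * u1" "map_poly vr_r f = k2 * u2" for f u1 u2
  proof -
    define a where "a g = (if g = ?G1 then emb u1 else emb u2)" for g
    have "f = (\<Sum>g\<in>{?G1, ?G2}. a g * g) + 0 * (monom 1 n - [:\<theta>:])"
      using \<open>?G1 \<noteq> ?G2\<close> f unfolding a_def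
      by (intro poly_vr_eqI) (simp_all add: vr_v.map_poly_simps vr_r.map_poly_simps mult.commute)
    then show ?thesis
      unfolding quot_ideal_gen_def degree_monom_minus_const[OF n] using f(1) by blast
  qed
  moreover have "quot_ideal_gen (monom 1 n - [:\<theta>:]) {?G1, ?G2} \<subseteq>
      {f. degree f < n \<and> k1 dvd map_poly vr_v f \<and> k2 dvd map_poly vr_r f}"
    by (rule quot_ideal_gen_subset_vr[OF n d1 d2])
      (auto simp: vr_v.map_poly_simps vr_r.map_poly_simps)
  ultimately show ?thesis
    unfolding poly_of_vr_code_divisible_words[OF n] by (auto elim!: dvdE)
qed

lemma quot_ideal_gen_vr_sum:
  fixes \<theta> :: "'a::comm_ring_1 vr"
  assumes n: "n > 0"
    and d1: "k1 dvd monom 1 n - [:vr_v \<theta>:]" and d2: "k2 dvd monom 1 n - [:vr_r \<theta>:]"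
  shows "quot_ideal_gen (monom 1 n - [:\<theta>:]) {[:vv:] * emb k1 + [:1 - vv:] * emb k2} =
    poly_of n ` vr_code n (divisible_words n k1) (divisible_words n k2)"
proof -
  let ?G = "[:vv:] * emb k1 + [:1 - vv:] * emb k2"
  have "f \<in> quot_ideal_gen (monom 1 n - [:\<theta>:]) {?G}"
    if f: "degree f < n" "map_poly vr_v f = k1 * u1" "map_poly vr_r f = k2 * u2" for f u1 u2
  proof -
    define a where "a g = [:vv:] * emb u1 + [:1 - vv:] * emb u2" for g :: "'a vr poly"
    have "f = (\<Sum>g\<in>{?G}. a g * g) + 0 * (monom 1 n - [:\<theta>:])"
      using f unfolding a_def
      by (intro poly_vr_eqI) (simp_all add: vr_v.map_poly_simps vr_r.map_poly_simps mult.commute)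
    then show ?thesis
      unfolding quot_ideal_gen_def degree_monom_minus_const[OF n] using f(1) by blast
  qed
  moreover have "quot_ideal_gen (monom 1 n - [:\<theta>:]) {?G} \<subseteq>
      {f. degree f < n \<and> k1 dvd map_poly vr_v f \<and> k2 dvd map_poly vr_r f}"
    by (rule quot_ideal_gen_subset_vr[OF n d1 d2])
      (auto simp: vr_v.map_poly_simps vr_r.map_poly_simps)
  ultimately show ?thesis
    unfolding poly_of_vr_code_divisible_words[OF n] by (auto elim!: dvdE)
qed


section \<open>The Gray map\<close>

lemma map_poly_vr_q: "map_poly vr_q f = map_poly vr_v f - map_poly vr_r f"
  by (rule poly_eqI) (simp add: coeff_map_poly vr_v_def zero_vr_def)

lemma gray_eq:
  "gray \<theta> n f = smult (vr_v \<theta>) (map_poly vr_v f) * ([:vr_r \<theta>:] - monom 1 n)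
    + smult (vr_r \<theta>) (map_poly vr_r f) * (monom 1 n - [:vr_v \<theta>:])"
  by (simp add: gray_def Let_def map_poly_vr_q vr_v_def algebra_simps smult_add_left
      smult_diff_right)

lemma degree_gray_less:
  assumes "degree f < n"
  shows "degree (gray \<theta> n f) < 2 * n"
proof -
  have summand: "degree (smult c (map_poly \<phi> f) * p) < 2 * n"
    if "degree p \<le> n" for c \<phi> and p :: "'a poly"
    using degree_mult_le[of "smult c (map_poly \<phi> f)" p] degree_smult_le[of c "map_poly \<phi> f"]
      map_poly_degree_leq[of \<phi> f] that assms by linarith
  show ?thesis
    unfolding gray_eq
    by (rule le_less_trans[OF degree_add_le_max], subst max_less_iff_conj, intro conjI summand)
      (auto intro!: degree_le)
qed

(* For z = 1/l with z^2 <> 1, the ideal (k, x^2n - 1) contains the unit z^2 - 1, since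
   x^2n - 1 = (x^n - z)(x^n + z) + (z^2 - 1); otherwise z = l and l - x^n is a multiple of k. *)
lemma const_minus_monom_mem_ideal:
  fixes l :: "'a::field" and k :: "'a poly"
  assumes l: "l \<noteq> 0" and k: "k dvd monom 1 n - [:inverse l:]"
  shows "\<exists>s t. [:l:] - monom 1 n = s * k + t * (monom 1 (2 * n) - 1)"
proof -
  let ?X = "monom (1::'a) n" and ?z = "inverse l"
  obtain k' where k': "?X - [:?z:] = k * k'" using k by (elim dvdE)
  have E: "monom 1 (2 * n) - 1 = k * (k' * (?X + [:?z:])) + [:?z * ?z - 1:]"
  proof -
    have "monom (1::'a) (2 * n) = ?X * ?X" by (simp add: mult_monom mult_2)
    then show ?thesis
      unfolding mult.assoc[symmetric] k'[symmetric] by (simp add: algebra_simps one_pCons)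
  qed
  show ?thesis
  proof (cases "?z * ?z = 1")
    case True
    then have "?z = l" by (metis inverse_inverse_eq inverse_unique)
    then have "[:l:] - ?X = (- k') * k + 0 * (monom 1 (2 * n) - 1)"
      using k' by (simp add: algebra_simps)
    then show ?thesis by blast
  next
    case False
    define e where "e = ?z * ?z - 1"
    have "e \<noteq> 0" using False by (simp add: e_def)
    let ?A = "[:l:] - ?X"
    have "(- ([:inverse e:] * ?A * k' * (?X + [:?z:]))) * k
        + ([:inverse e:] * ?A) * (monom 1 (2 * n) - 1)
        = [:inverse e:] * (?A * (monom 1 (2 * n) - 1 - k * (k' * (?X + [:?z:]))))"
      by algebra
    also have "\<dots> = ?A"
      unfolding E e_def[symmetric] using \<open>e \<noteq> 0\<close> by simp
    finally show ?thesis by metis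
  qed
qed

lemma gray_mem_quot_ideal_gen:
  fixes \<theta> :: "'a::field vr"
  assumes f: "degree f < n" "k1 dvd map_poly vr_v f" "k2 dvd map_poly vr_r f"
    and \<theta>: "vr_v \<theta> \<noteq> 0" "vr_r \<theta> \<noteq> 0"
    and d1: "k1 dvd monom 1 n - [:inverse (vr_v \<theta>):]"
    and d2: "k2 dvd monom 1 n - [:inverse (vr_r \<theta>):]"
  shows "gray \<theta> n f \<in> quot_ideal_gen (monom 1 (2 * n) - 1) {k1 * k2}"
proof -
  let ?X = "monom (1::'a) n" and ?E = "monom (1::'a) (2 * n) - 1"
  obtain u1 u2 where u: "map_poly vr_v f = k1 * u1" "map_poly vr_r f = k2 * u2"
    using f by (auto elim!: dvdE)
  obtain s1 t1 where st1: "[:vr_v \<theta>:] - ?X = s1 * k1 + t1 * ?E"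
    using const_minus_monom_mem_ideal[OF \<theta>(1) d1] by blast
  obtain s2 t2 where st2: "[:vr_r \<theta>:] - ?X = s2 * k2 + t2 * ?E"
    using const_minus_monom_mem_ideal[OF \<theta>(2) d2] by blast
  have "gray \<theta> n f = smult (vr_v \<theta>) (k1 * u1) * (s2 * k2 + t2 * ?E)
      - smult (vr_r \<theta>) (k2 * u2) * (s1 * k1 + t1 * ?E)"
    unfolding gray_eq u st2 st1[symmetric] by (simp add: algebra_simps)
  also have "\<dots> = (smult (vr_v \<theta>) (u1 * s2) - smult (vr_r \<theta>) (u2 * s1)) * (k1 * k2)
      + (smult (vr_v \<theta>) (k1 * u1 * t2) - smult (vr_r \<theta>) (k2 * u2 * t1)) * ?E"
    by (simp add: algebra_simps)
  finally have "\<exists>a q. gray \<theta> n f = (\<Sum>g\<in>{k1 * k2}. a g * g) + q * ?E"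
    by auto
  moreover have "degree ?E = 2 * n"
    using degree_monom_minus_const[of "2 * n" "1::'a"] f(1) by (simp add: one_pCons)
  ultimately show ?thesis
    using degree_gray_less[OF f(1)] by (simp add: quot_ideal_gen_def)
qed

section \<open>Dual of a constacyclic code over F + vF\<close>

lemma vr_unit_components:
  fixes \<theta> :: "'a::field vr"
  assumes "\<theta> dvd 1"
  shows "vr_v \<theta> \<noteq> 0" "vr_r \<theta> \<noteq> 0"
    and "vr_v (vinv \<theta>) = inverse (vr_v \<theta>)" "vr_r (vinv \<theta>) = inverse (vr_r \<theta>)"
proof -
  obtain u where u: "\<theta> * u = 1" using assms by (elim dvdE) simp
  have "vr_v \<theta> * vr_v u = 1" "vr_r \<theta> * vr_r u = 1"
    using arg_cong[OF u, of vr_v] arg_cong[OF u, of vr_r] by simp_all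
  then show "vr_v \<theta> \<noteq> 0" "vr_r \<theta> \<noteq> 0"
    and "vr_v (vinv \<theta>) = inverse (vr_v \<theta>)" "vr_r (vinv \<theta>) = inverse (vr_r \<theta>)"
    by (auto simp: vinv_eq[OF u] inverse_unique)
qed

theorem theorem3p16:
  fixes p n :: nat and \<theta> :: "'a::field vr" and C :: "(nat \<Rightarrow> 'a vr) set"
    and g1 g2 h1 h2 :: "'a poly"
  assumes p: "prime p" "odd p" "CARD('a) = p"
    and n: "n > 0"
    and unit: "\<theta> dvd 1"
    and cc: "constacyclic \<theta> n C"
    and g1: "lead_coeff g1 = 1" "g1 dvd (monom 1 n - [:vr_r \<theta> + vr_q \<theta>:])"
    and g2: "lead_coeff g2 = 1" "g2 dvd (monom 1 n - [:vr_r \<theta>:])"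
    and gen: "poly_of n ` C = quot_ideal_gen (monom 1 n - [:\<theta>:]) {[:vv:] * emb g1, [:1 - vv:] * emb g2}"
    and h1: "g1 * h1 = monom 1 n - [:vr_r \<theta> + vr_q \<theta>:]"
    and h2: "g2 * h2 = monom 1 n - [:vr_r \<theta>:]"
  shows "poly_of n ` dual_code n C = quot_ideal_gen (monom 1 n - [:vinv \<theta>:])
            {[:vv:] * emb (recip_star h1), [:1 - vv:] * emb (recip_star h2)}
       \<and> card (dual_code n C) = p ^ (degree g1 + degree g2)
       \<and> poly_of n ` dual_code n C = quot_ideal_gen (monom 1 n - [:vinv \<theta>:])
            {[:vv:] * emb (recip_star h1) + [:1 - vv:] * emb (recip_star h2)}
       \<and> gray \<theta> n ` poly_of n ` dual_code n C
            \<subseteq> quot_ideal_gen (monom 1 (2 * n) - 1) {recip_star h1 * recip_star h2}"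
proof -
  have fin: "finite (UNIV :: 'a set)"
    using p by (metis card_ge_0_finite prime_gt_0_nat)
  note \<theta> = vr_unit_components[OF unit]
  have h1': "g1 * h1 = monom 1 n - [:vr_v \<theta>:]" and g1': "g1 dvd monom 1 n - [:vr_v \<theta>:]"
    using h1 g1 by (simp_all add: vr_v_def)
  let ?V = "vr_code n (divisible_words n (recip_star h1)) (divisible_words n (recip_star h2))"
  have "C \<subseteq> words n"
    using cc by (simp add: constacyclic_def submodule_code_def)
  then have "C = vr_code n (divisible_words n g1) (divisible_words n g2)"
    by (rule poly_of_image_eqD[OF _ vr_code_subset_words])
      (simp only: gen quot_ideal_gen_vr_pair[OF n g1' g2(2)])
  then have dual: "dual_code n C = ?V"
    by (simp add: dual_vr_code zero_mem_divisible_words divisible_words_subset_words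
        dual_divisible_words(1)[OF fin n h1' \<theta>(1)] dual_divisible_words(1)[OF fin n h2 \<theta>(2)])
  have d1: "recip_star h1 dvd monom 1 n - [:vr_v (vinv \<theta>):]"
    using recip_star_dvd[OF n h1' \<theta>(1)] \<theta>(3) by simp
  have d2: "recip_star h2 dvd monom 1 n - [:vr_r (vinv \<theta>):]"
    using recip_star_dvd[OF n h2 \<theta>(2)] \<theta>(4) by simp
  have "card ?V = p ^ (degree g1 + degree g2)"
    using dual_divisible_words[OF fin n h1' \<theta>(1)] dual_divisible_words[OF fin n h2 \<theta>(2)] p(3)
    by (simp add: card_vr_code divisible_words_subset_words power_add)
  moreover have "gray \<theta> n ` poly_of n ` ?V
      \<subseteq> quot_ideal_gen (monom 1 (2 * n) - 1) {recip_star h1 * recip_star h2}"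
    using d1 d2 \<theta>
    by (auto simp: poly_of_vr_code_divisible_words[OF n] intro!: gray_mem_quot_ideal_gen)
  ultimately show ?thesis
    unfolding dual quot_ideal_gen_vr_pair[OF n d1 d2] quot_ideal_gen_vr_sum[OF n d1 d2] by simp
qed

end
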